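(* Under the standing assumptions (A1)–(A5), the function $Iu$ is continuous on $\mathbb{R}^n$, where $u$ is the value function and $I\varphi(x)=\int_{\mathbb{R}^l}[\varphi(x+j(x,z))-\varphi(x)]\,\nu(dz)$.
   Context: Let $(\Omega,\mathcal F,(\mathcal F_t)_{t\ge0},\mathbb P)$ be a complete filtered probability space satisfying the usual conditions, carrying an $m$-dimensional Brownian motion $W$ and an independent Poisson random measure $N$ on $[0,\infty)\times\mathbb{R}^l$ with Lévy measure $\nu(\cdot)=\mathbb E N(1,\cdot)$ (possibly infinite), and compensated measure $\widetilde N(dt,dz)=N(dt,dz)-\nu(dz)dt$; the filtration is generated by $W$ and $N$. Given $\mu:\mathbb{R}^n\to\mathbb{R}^n$, $\sigma:\mathbb{R}^n\to\mathbb{R}^{n\times m}$, $j:\mathbb{R}^n\times\mathbb{R}^l\to\mathbb{R}^n$, $f:\mathbb{R}^n\to[0,\infty)$, $B:\mathbb{R}^n\to\mathbb{R}$ and $r>0$, the standing assumptions are: (A1) there are constants $C_\mu,C_\sigma>0$ and a positive function $C_j\in L^1\cap L^2(\mathbb{R}^l,\nu)$ with $|\mu(x)-\mu(y)|\le C_\mu|x-y|$, $\|\sigma(x)-\sigma(y)\|\le C_\sigma|x-y|$, $|j(x,z)-j(y,z)|\le C_j(z)|x-y|$ for all $x,y\in\mathbb{R}^n$, $z\in\mathbb{R}^l$; and $j(x,\cdot)\in L^1(\mathbb{R}^l;\nu)$ for every $x$. (A2) with $A(x)=(a_{ij}(x))=\frac12\sigma(x)\sigma(x)^{T}$, there is $\lambda>0$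 with $a_{ij}(x)\xi_i\xi_j\ge\lambda|\xi|^2$ for all $x,\xi$. (A3) $f\ge0$ and $|f(x)-f(y)|\le C_f|x-y|$ for some constant $C_f>0$. (A4) $\inf_{\xi}B(\xi)=K>0$, $B\in C(\mathbb{R}^n\setminus\{0\})$, $|B(\xi)|\to\infty$ as $|\xi|\to\infty$, and $B(\xi_1)+B(\xi_2)\ge B(\xi_1+\xi_2)+K$ for all $\xi_1,\xi_2$. (A5) $r>2C_\mu+C_\sigma^2+\int_{\mathbb{R}^l}C_j^2(z)\nu(dz)$. An admissible impulse control $V=(\tau_1,\xi_1;\tau_2,\xi_2;\dots)$ consists of stopping times $0<\tau_1<\tau_2<\cdots$ with $\tau_i\to\infty$ a.s. and $\mathcal F_{\tau_i}$-measurable $\mathbb{R}^n$-valued $\xi_i$. The controlled state satisfies $X(0)=x$, $dX(t)=\mu(X(t^-))dt+\sigma(X(t^-))dW(t)+\int j(X(t^-),z)\widetilde N(dt,dz)+\sum_i\delta(t-\tau_i)\xi_i$. The cost is $J_x[V]=\mathbb E_x\big(\int_0^\infty e^{-rt}f(X(t))dt+\sum_{i}e^{-r\tau_i}B(\xi_i)\big)$ and the value function is $u(x)=\inf_V J_x[V]$. The operator $I$ is defined on Lipschitz functions $\varphi$ by the formula in the claim ($u$ is Lipschitz). *)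

theory Defs
  imports "HOL-Analysis.Analysis"
begin

definition levy_measure :: "('l::euclidean_space) measure \<Rightarrow> bool" where
  "levy_measure \<nu> \<longleftrightarrow> sets \<nu> = sets borel \<and> emeasure \<nu> {0} = 0 \<and>
     integrable \<nu> (\<lambda>z. min 1 (norm z ^ 2))"

definition jump_op ::
  "('l::euclidean_space) measure \<Rightarrow> ('n::euclidean_space \<Rightarrow> 'l \<Rightarrow> 'n) \<Rightarrow> ('n \<Rightarrow> real) \<Rightarrow> 'n \<Rightarrow> real" where
  "jump_op \<nu> j \<phi> x = (\<integral>z. \<phi> (x + j x z) - \<phi> x \<partial>\<nu>)"

end

theory Submission
  imports Defs
begin

text \<open>For each \<open>z\<close> the integrand \<open>u(y + j(y,z)) - u(y)\<close> of \<open>I u\<close> is continuous in \<open>y\<close>,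
  and along a sequence \<open>y\<^sub>n \<rightarrow> x\<close> with \<open>|y\<^sub>n - x| \<le> B\<close> the Lipschitz bounds on \<open>u\<close> and \<open>j\<close>
  dominate it by the integrable function \<open>L (|j(x,z)| + C\<^sub>j(z) B)\<close>, so dominated convergence
  gives sequential continuity. Only the integrability of \<open>C\<^sub>j\<close> and of \<open>j(x,\<cdot>)\<close> is needed.\<close>

lemma lipschitz_jump_integrand_le:
  fixes u :: "'n::real_normed_vector \<Rightarrow> real"
  assumes u_lip: "L-lipschitz_on UNIV u"
    and j_lip: "\<And>x y. norm (j x z - j y z) \<le> C * norm (x - y)"
  shows "\<bar>u (y + j y z) - u y\<bar> \<le> L * (norm (j x z) + C * norm (y - x))"
proof -
  have jump_le: "norm (j y z) \<le> norm (j x z) + C * norm (y - x)"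
    using norm_triangle_ineq[of "j x z" "j y z - j x z"] j_lip[of y x] by simp
  have "\<bar>u (y + j y z) - u y\<bar> \<le> L * norm (j y z)"
    using lipschitz_onD[OF u_lip, of "y + j y z" y] by (simp add: dist_norm dist_real_def)
  also have "\<dots> \<le> L * (norm (j x z) + C * norm (y - x))"
    using jump_le lipschitz_on_nonneg[OF u_lip] by (rule mult_left_mono)
  finally show ?thesis .
qed

lemma jump_integrand_tendsto:
  fixes u :: "'n::real_normed_vector \<Rightarrow> real"
  assumes u_cont: "continuous_on UNIV u"
    and j_lip: "\<And>x y. norm (j x z - j y z) \<le> C * norm (x - y)"
    and X: "X \<longlonglongrightarrow> x"
  shows "(\<lambda>n. u (X n + j (X n) z) - u (X n)) \<longlonglongrightarrow> u (x + j x z) - u x"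
proof -
  have "\<forall>\<^sub>F n in sequentially. norm (j (X n) z - j x z) \<le> C * norm (X n - x)"
    using j_lip by (intro always_eventually allI)
  moreover have "(\<lambda>n. C * norm (X n - x)) \<longlonglongrightarrow> 0"
    using tendsto_mult_right_zero[OF tendsto_norm_zero[OF LIM_zero[OF X]]] .
  ultimately have "(\<lambda>n. j (X n) z - j x z) \<longlonglongrightarrow> 0"
    by (rule Lim_null_comparison)
  then have "(\<lambda>n. j (X n) z) \<longlonglongrightarrow> j x z"
    by (rule LIM_zero_cancel)
  with X have "(\<lambda>n. X n + j (X n) z) \<longlonglongrightarrow> x + j x z"
    by (rule tendsto_add)
  then show ?thesis
    using X u_cont by (intro tendsto_diff continuous_on_tendsto_compose[where f=u]) auto
qed

lemma borel_measurable_jump_integrand: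
  fixes u :: "'n::euclidean_space \<Rightarrow> real" and j :: "'n \<Rightarrow> 'l::euclidean_space \<Rightarrow> 'n"
  assumes "continuous_on UNIV u" and "integrable \<nu> (j y)"
  shows "(\<lambda>z. u (y + j y z) - u y) \<in> borel_measurable \<nu>"
proof -
  have "j y \<in> borel_measurable \<nu>"
    using assms(2) by (rule borel_measurable_integrable)
  then have "(\<lambda>z. y + j y z) \<in> borel_measurable \<nu>"
    by simp
  moreover have "u \<in> borel_measurable borel"
    using assms(1) by (rule borel_measurable_continuous_onI)
  ultimately have "(\<lambda>z. u (y + j y z)) \<in> borel_measurable \<nu>"
    by (rule measurable_compose)
  then show ?thesis
    by simp
qed

lemma jump_op_tendsto_lipschitz:
  fixes u :: "'n::euclidean_space \<Rightarrow> real" and j :: "'n \<Rightarrow> 'l::euclidean_space \<Rightarrow> 'n"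
  assumes u_lip: "L-lipschitz_on UNIV u"
    and C_nonneg: "\<And>z. 0 \<le> C z"
    and C_int: "integrable \<nu> C"
    and j_lip: "\<And>x y z. norm (j x z - j y z) \<le> C z * norm (x - y)"
    and j_int: "\<And>x. integrable \<nu> (j x)"
    and X: "X \<longlonglongrightarrow> x"
  shows "(\<lambda>n. jump_op \<nu> j u (X n)) \<longlonglongrightarrow> jump_op \<nu> j u x"
proof -
  have u_cont: "continuous_on UNIV u"
    using u_lip by (rule lipschitz_on_continuous_on)
  have "(\<lambda>n. norm (X n - x)) \<longlonglongrightarrow> 0"
    using tendsto_norm_zero[OF LIM_zero[OF X]] .
  then have "Bseq (\<lambda>n. norm (X n - x))"
    by (rule convergent_imp_Bseq[OF convergentI])
  then obtain B where B: "\<And>n. norm (X n - x) \<le> B"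
    by (auto simp: Bseq_def)
  show ?thesis
    unfolding jump_op_def
  proof (rule integral_dominated_convergence[where w="\<lambda>z. L * (norm (j x z) + C z * B)"])
    show "integrable \<nu> (\<lambda>z. L * (norm (j x z) + C z * B))"
      using integrable_norm[OF j_int[of x]] integrable_mult_left[OF C_int, of B]
      by (intro integrable_mult_right Bochner_Integration.integrable_add)
    show "AE z in \<nu>. (\<lambda>n. u (X n + j (X n) z) - u (X n)) \<longlonglongrightarrow> u (x + j x z) - u x"
      using u_cont j_lip X by (intro AE_I2 jump_integrand_tendsto)
    show "AE z in \<nu>. norm (u (X n + j (X n) z) - u (X n)) \<le> L * (norm (j x z) + C z * B)" for n
    proof (rule AE_I2)
      fix z
      have "\<bar>u (X n + j (X n) z) - u (X n)\<bar> \<le> L * (norm (j x z) + C z * norm (X n - x))"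
        using u_lip j_lip by (rule lipschitz_jump_integrand_le)
      also have "\<dots> \<le> L * (norm (j x z) + C z * B)"
        using B[of n] C_nonneg[of z] lipschitz_on_nonneg[OF u_lip]
        by (intro mult_left_mono add_left_mono) auto
      finally show "norm (u (X n + j (X n) z) - u (X n)) \<le> L * (norm (j x z) + C z * B)"
        by simp
    qed
    show "(\<lambda>z. u (x + j x z) - u x) \<in> borel_measurable \<nu>"
      using u_cont j_int by (rule borel_measurable_jump_integrand)
    show "(\<lambda>z. u (X n + j (X n) z) - u (X n)) \<in> borel_measurable \<nu>" for n
      using u_cont j_int by (rule borel_measurable_jump_integrand)
  qed
qed

theorem lemma3p2:
  fixes \<nu> :: "(real ^ 'l) measure"
    and j :: "real ^ 'n \<Rightarrow> real ^ 'l \<Rightarrow> real ^ 'n"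
    and Cj :: "real ^ 'l \<Rightarrow> real"
    and u :: "real ^ 'n \<Rightarrow> real"
    and L :: real
  assumes levy: "levy_measure \<nu>"
    and Cj_pos: "\<And>z. Cj z > 0"
    and Cj_L1: "integrable \<nu> Cj"
    and Cj_L2: "integrable \<nu> (\<lambda>z. (Cj z)\<^sup>2)"
    and j_lip: "\<And>x y z. norm (j x z - j y z) \<le> Cj z * norm (x - y)"
    and j_L1: "\<And>x. integrable \<nu> (\<lambda>z. j x z)"
    and u_lip: "L-lipschitz_on UNIV u"
  shows "continuous_on UNIV (jump_op \<nu> j u)"
proof (rule continuous_at_imp_continuous_on, intro ballI)
  fix x :: "real ^ 'n"
  have Cj_nonneg: "0 \<le> Cj z" for z
    using Cj_pos[of z] by simp
  show "isCont (jump_op \<nu> j u) x"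
    unfolding continuous_at_sequentially comp_def
    using jump_op_tendsto_lipschitz[OF u_lip Cj_nonneg Cj_L1 j_lip j_L1] by blast
qed

end
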